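(* Let $\boldsymbol{m}=(m_1,m_2)\in\mathbb{N}^2$ and $g=\gcd(m_1,m_2)$. (a) $\displaystyle \mathcal{R}^{(\boldsymbol{m})}=\bigcup_{\rho=0}^{2g-1}\boldsymbol{\varrho}^{(\boldsymbol{m})}_{\rho/m_2}\big([0,2\pi)\big)$. (b) $\mathrm{LS}^{(\boldsymbol{m})}=\{\boldsymbol{x}(r,\theta)\in\mathbb{D}:\ T_{m_1}(r)^2=\cos^2(m_2\theta)\in\{0,1\}\}$, where $\boldsymbol{x}(r,\theta)=(r\cos\theta,r\sin\theta)$ with $r\in[0,1]$, $\theta\in\mathbb{R}$.
   Context: $\mathbb{D}=\{x\in\mathbb{R}^2:|x|\le1\}$. $T_n(r)=\cos(n\arccos r)$ is the Chebyshev polynomial of degree $n$, and $H_{m_2}(x_1,x_2)=\sum_{k=0}^{\lfloor m_2/2\rfloor}\binom{m_2}{2k}(-1)^kx_1^{m_2-2k}x_2^{2k}$ (so that $H_{m_2}(\cos\theta,\sin\theta)=\cos(m_2\theta)$). The rhodonea variety is $\mathcal{R}^{(\boldsymbol{m})}=\{x\in\mathbb{D}:\ (x_1^2+x_2^2)^{m_2}T_{m_1}(\sqrt{x_1^2+x_2^2})^2=H_{m_2}(x_1,x_2)^2\}$, equivalently, in polar coordinates, $\{\boldsymbol{x}(r,\theta)\in\mathbb{D}: T_{m_1}(r)^2=\cos^2(m_2\theta)\}$. Rhodonea curve: $\boldsymbol{\varrho}^{(\boldsymbol{m})}_\alpha(t)=\big(\cos(m_2t)\cos(m_1t-\alpha\pi),\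 \cos(m_2t)\sin(m_1t-\alpha\pi)\big)$. Nodal index set $\mathrm{I}^{(\boldsymbol{m})}=\{(i_1,i_2)\in\mathbb{Z}^2:\ 0\le i_1\le m_1,\ -2m_2<i_2\le 2m_2,\ i_2\le0\text{ if }i_1=m_1,\ i_1+i_2\text{ even}\}$; rhodonea nodes $\mathrm{LS}^{(\boldsymbol{m})}=\{(r_{i_1}\cos\theta_{i_2},r_{i_1}\sin\theta_{i_2}):\boldsymbol{i}\in\mathrm{I}^{(\boldsymbol{m})}\}$ with $r_{i_1}=\cos\!\big(\frac{i_1\pi}{2m_1}\big)$, $\theta_{i_2}=\frac{i_2\pi}{2m_2}$. *)

theory Defs
  imports "HOL-Analysis.Analysis"
begin

definition unit_disk :: "(real \<times> real) set" where
  "unit_disk = {(x1, x2). x1\<^sup>2 + x2\<^sup>2 \<le> 1}"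

definition cheb_T :: "nat \<Rightarrow> real \<Rightarrow> real" where
  "cheb_T n r = cos (real n * arccos r)"

text \<open>H_{m2}(x1,x2), with H_{m2}(cos t, sin t) = cos(m2 t).\<close>
definition harm_H :: "nat \<Rightarrow> real \<Rightarrow> real \<Rightarrow> real" where
  "harm_H m2 x1 x2 = (\<Sum>k = 0..m2 div 2.
      real (m2 choose (2 * k)) * (-1) ^ k * x1 ^ (m2 - 2 * k) * x2 ^ (2 * k))"

definition rhodonea_variety :: "nat \<Rightarrow> nat \<Rightarrow> (real \<times> real) set" where
  "rhodonea_variety m1 m2 = {(x1, x2). (x1, x2) \<in> unit_disk \<and>
      (x1\<^sup>2 + x2\<^sup>2) ^ m2 * (cheb_T m1 (sqrt (x1\<^sup>2 + x2\<^sup>2)))\<^sup>2 = (harm_H m2 x1 x2)\<^sup>2}"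

definition rhodonea_curve :: "nat \<Rightarrow> nat \<Rightarrow> real \<Rightarrow> real \<Rightarrow> real \<times> real" where
  "rhodonea_curve m1 m2 \<alpha> t =
     (cos (real m2 * t) * cos (real m1 * t - \<alpha> * pi),
      cos (real m2 * t) * sin (real m1 * t - \<alpha> * pi))"

definition nodal_index :: "nat \<Rightarrow> nat \<Rightarrow> (int \<times> int) set" where
  "nodal_index m1 m2 = {(i1, i2). 0 \<le> i1 \<and> i1 \<le> int m1 \<and>
      - 2 * int m2 < i2 \<and> i2 \<le> 2 * int m2 \<and>
      (i1 = int m1 \<longrightarrow> i2 \<le> 0) \<and> even (i1 + i2)}"

definition rhodonea_nodes :: "nat \<Rightarrow> nat \<Rightarrow> (real \<times> real) set" where
  "rhodonea_nodes m1 m2 =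
     (\<lambda>(i1, i2). (cos (real_of_int i1 * pi / (2 * real m1)) * cos (real_of_int i2 * pi / (2 * real m2)),
                  cos (real_of_int i1 * pi / (2 * real m1)) * sin (real_of_int i2 * pi / (2 * real m2))))
     ` nodal_index m1 m2"

definition polar_pt :: "real \<Rightarrow> real \<Rightarrow> real \<times> real" where
  "polar_pt r \<theta> = (r * cos \<theta>, r * sin \<theta>)"

end

theory Submission
  imports Defs
begin

text \<open>In polar coordinates the variety is \<open>T\<^sub>m\<^sub>1(r)\<^sup>2 = cos\<^sup>2(m\<^sub>2 \<theta>)\<close>. A point of the curve
  with index \<open>\<rho>\<close> has radius \<open>cos(m\<^sub>2 t)\<close> and angle \<open>m\<^sub>1 t - \<rho>\<pi>/m\<^sub>2\<close>, and it satisfies this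
  equation because \<open>T\<^sub>n(|cos u|)\<^sup>2 = cos\<^sup>2(n u)\<close>. Conversely, write \<open>r = cos s\<close> with
  \<open>m\<^sub>2 \<theta> = m\<^sub>1 s + k\<pi>\<close> and put \<open>m\<^sub>2 t = s + j\<pi>\<close>: the curve point has radius \<open>\<plusminus>r\<close> and its angle
  differs from \<open>\<theta>\<close> by a multiple of \<open>\<pi>\<close> of the matching parity as soon as
  \<open>\<rho> + k = (m\<^sub>1 - m\<^sub>2) j + 2 m\<^sub>2 l\<close>. Such \<open>j, l\<close> exist for some \<open>0 \<le> \<rho> < 2 gcd(m\<^sub>1, m\<^sub>2)\<close>, since
  \<open>gcd(m\<^sub>1 - m\<^sub>2, 2 m\<^sub>2)\<close> divides \<open>2 gcd(m\<^sub>1, m\<^sub>2)\<close>; periodicity of the curves brings \<open>t\<close> into \<open>[0, 2\<pi>)\<close>.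

  For the nodes, \<open>T\<^sub>m\<^sub>1(r)\<^sup>2\<close> and \<open>cos\<^sup>2(m\<^sub>2 \<theta>)\<close> lie in \<open>{0, 1}\<close> exactly at \<open>r = cos(i\<^sub>1\<pi>/(2m\<^sub>1))\<close>
  and \<open>\<theta> = i\<^sub>2\<pi>/(2m\<^sub>2)\<close>, where they take the values given by the parities of \<open>i\<^sub>1\<close> and \<open>i\<^sub>2\<close>.
  Reducing \<open>i\<^sub>2\<close> modulo \<open>4 m\<^sub>2\<close>, and using \<open>r = 0\<close> when \<open>i\<^sub>1 = m\<^sub>1\<close>, lands in the nodal index set.\<close>

lemma Re_i_power: "Re (\<i> ^ k) = (if even k then (-1) ^ (k div 2) else 0)"
proof -
  have "\<i> ^ k = (\<i>\<^sup>2) ^ (k div 2) * \<i> ^ (k mod 2)"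
    by (metis div_mult_mod_eq power_add power_mult mult.commute)
  also have "\<dots> = (-1) ^ (k div 2) * \<i> ^ (k mod 2)"
    by simp
  finally show ?thesis
    by (cases "even k") (auto simp: odd_iff_mod_2_eq_one elim!: oddE)
qed

lemma harm_H_eq_Re_power: "harm_H m x y = Re (Complex x y ^ m)"
proof -
  have xy: "Complex x y = \<i> * of_real y + of_real x"
    by (simp add: complex_eq_iff)
  define f where "f k = real (m choose k) * Re (\<i> ^ k) * y ^ k * x ^ (m - k)" for k
  have "Re (Complex x y ^ m) = (\<Sum>k\<le>m. f k)"
    unfolding xy binomial_ring f_def
    by (simp add: Re_sum power_mult_distrib mult.assoc flip: of_real_power)
  also have "\<dots> = (\<Sum>k\<in>(\<lambda>j. 2 * j) ` {0..m div 2}. f k)"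
    by (rule sum.mono_neutral_right) (auto simp: f_def Re_i_power)
  also have "\<dots> = (\<Sum>j = 0..m div 2. f (2 * j))"
    by (subst sum.reindex) (auto simp: inj_on_def)
  also have "\<dots> = harm_H m x y"
    unfolding harm_H_def f_def by (intro sum.cong) (auto simp: Re_i_power)
  finally show ?thesis ..
qed

lemma harm_H_polar: "harm_H m (r * cos t) (r * sin t) = r ^ m * cos (real m * t)"
proof -
  have "Complex (r * cos t) (r * sin t) = rcis r t"
    by (simp add: complex_eq_iff)
  then show ?thesis
    by (simp add: harm_H_eq_Re_power DeMoivre2)
qed

lemma cos_add_int_pi: "cos (x + of_int n * pi) = cos (of_int n * pi) * cos x"
  by (simp add: cos_add mult.commute[of _ pi])

lemma sin_add_int_pi: "sin (x + of_int n * pi) = cos (of_int n * pi) * sin x"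
  by (simp add: sin_add mult.commute[of _ pi])

lemma cos_int_pi_squared: "(cos (of_int n * pi))\<^sup>2 = 1"
  by (simp add: mult.commute[of _ pi])

lemma cos_squared_add_int_pi: "(cos (x + of_int n * pi))\<^sup>2 = (cos x)\<^sup>2"
  by (simp add: cos_add_int_pi power_mult_distrib cos_int_pi_squared)

lemma cos_squared_eq_cos_squaredE:
  assumes "(cos a)\<^sup>2 = (cos b)\<^sup>2"
  obtains k :: int where "a = b + of_int k * pi \<or> a = - b + of_int k * pi"
proof -
  have halves: "(2 * a + 2 * b) / 2 = a + b" "(2 * b - 2 * a) / 2 = b - a"
    by simp_all
  have "cos (2 * a) - cos (2 * b) = 0"
    using assms by (simp add: cos_double_cos)
  moreover have "cos (2 * a) - cos (2 * b) = 2 * sin (a + b) * sin (b - a)"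
    using cos_diff_cos[of "2 * a" "2 * b"] by (simp only: halves)
  ultimately have "sin (a + b) = 0 \<or> sin (b - a) = 0"
    by simp
  then show ?thesis
  proof
    assume "sin (a + b) = 0"
    then obtain k :: int where "a + b = of_int k * pi"
      by (auto simp: sin_zero_iff_int2)
    then show ?thesis
      using that[of k] by (simp add: algebra_simps)
  next
    assume "sin (b - a) = 0"
    then obtain k :: int where "b - a = of_int k * pi"
      by (auto simp: sin_zero_iff_int2)
    then show ?thesis
      using that[of "- k"] by (simp add: algebra_simps)
  qed
qed

lemmas cos_plus_2pi_multiple = cos.plus_of_int[where 'a=real, simplified]
lemmas sin_plus_2pi_multiple = sin.plus_of_int[where 'a=real, simplified]

lemma cheb_T_cos: "cheb_T n (cos u) = cos (real n * u)"
proof -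
  obtain k :: int where "u = arccos (cos u) + 2 * k * pi \<or> u = - arccos (cos u) + 2 * k * pi"
    using cos_eq_arccos_Ex[of u "cos u"] by auto
  then have "arccos (cos u) = u + of_int (- k) * (2 * pi)
      \<or> arccos (cos u) = - u + of_int k * (2 * pi)"
    by auto
  then have "real n * arccos (cos u) = real n * u + of_int (- (int n * k)) * (2 * pi)
      \<or> real n * arccos (cos u) = - (real n * u) + of_int (int n * k) * (2 * pi)"
  proof
    assume arccos_eq: "arccos (cos u) = u + of_int (- k) * (2 * pi)"
    show ?thesis
      by (intro disjI1) (simp only: arccos_eq, simp add: algebra_simps)
  next
    assume arccos_eq: "arccos (cos u) = - u + of_int k * (2 * pi)"
    show ?thesis
      by (intro disjI2) (simp only: arccos_eq, simp add: algebra_simps)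
  qed
  then show ?thesis
    unfolding cheb_T_def by (metis cos_plus_2pi_multiple cos_minus)
qed

lemma cheb_T_abs_cos_squared: "(cheb_T n \<bar>cos u\<bar>)\<^sup>2 = (cos (real n * u))\<^sup>2"
proof (cases "cos u \<ge> 0")
  case True
  then show ?thesis
    by (simp add: cheb_T_cos)
next
  case False
  then have "\<bar>cos u\<bar> = cos (u + of_int 1 * pi)"
    by simp
  then have "cheb_T n \<bar>cos u\<bar> = cos (real n * (u + of_int 1 * pi))"
    by (simp only: cheb_T_cos)
  also have "real n * (u + of_int 1 * pi) = real n * u + of_int (int n) * pi"
    by (simp add: algebra_simps)
  finally have "cheb_T n \<bar>cos u\<bar> = cos (real n * u + of_int (int n) * pi)" .
  then show ?thesis
    by (simp only: cos_squared_add_int_pi)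
qed

lemma cos_half_pi_multiple_squared:
  "(cos (of_int i * (pi / 2)))\<^sup>2 = (if even i then 1 else 0)"
proof (cases "even i")
  case True
  then obtain a where "of_int i * (pi / 2) = of_int a * pi"
    by (auto elim!: evenE)
  then show ?thesis
    using True cos_int_pi_squared by simp
next
  case False
  then show ?thesis
    using cos_zero_iff_int by auto
qed

lemma cos_squared_in_01_iff: "(cos x)\<^sup>2 \<in> {0, 1} \<longleftrightarrow> (\<exists>i :: int. x = of_int i * (pi / 2))"
proof
  assume "(cos x)\<^sup>2 \<in> {0, 1}"
  then have "cos x = 0 \<or> sin x = 0"
    using sin_squared_eq[of x] by auto
  then show "\<exists>i :: int. x = of_int i * (pi / 2)"
    using cos_zero_iff_int sin_zero_iff_int by blast
next
  assume "\<exists>i :: int. x = of_int i * (pi / 2)"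
  then obtain i :: int where x: "x = of_int i * (pi / 2)" ..
  show "(cos x)\<^sup>2 \<in> {0, 1}"
    by (simp only: x cos_half_pi_multiple_squared) simp
qed

lemma polar_pt_in_unit_disk_iff: "polar_pt r \<theta> \<in> unit_disk \<longleftrightarrow> \<bar>r\<bar> \<le> 1"
proof -
  have "(r * cos \<theta>)\<^sup>2 + (r * sin \<theta>)\<^sup>2 = r\<^sup>2"
    by (simp add: power_mult_distrib flip: distrib_left)
  then show ?thesis
    unfolding unit_disk_def polar_pt_def by (simp add: abs_square_le_1)
qed

lemma polar_pt_add_2pi_multiple: "polar_pt r (\<theta> + of_int q * (2 * pi)) = polar_pt r \<theta>"
  by (simp add: polar_pt_def cos_plus_2pi_multiple sin_plus_2pi_multiple)

lemma polar_pt_add_int_pi: "polar_pt (cos (of_int n * pi) * r) (\<theta> + of_int n * pi) = polar_pt r \<theta>"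
proof -
  have "cos (of_int n * pi) * cos (of_int n * pi) = 1"
    using cos_int_pi_squared[of n] by (simp add: power2_eq_square)
  then show ?thesis
    unfolding polar_pt_def cos_add_int_pi sin_add_int_pi
    by (metis mult.assoc mult.left_commute mult_1)
qed

lemma polar_ptE:
  obtains \<theta> where "p = polar_pt (sqrt ((fst p)\<^sup>2 + (snd p)\<^sup>2)) \<theta>"
proof (cases "p = (0, 0)")
  case True
  then show ?thesis
    using that[of 0] by (simp add: polar_pt_def)
next
  case False
  define R where "R = sqrt ((fst p)\<^sup>2 + (snd p)\<^sup>2)"
  have "R \<noteq> 0"
    using False by (auto simp: R_def prod_eq_iff)
  moreover have "R\<^sup>2 = (fst p)\<^sup>2 + (snd p)\<^sup>2" "(fst p)\<^sup>2 + (snd p)\<^sup>2 \<noteq> 0"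
    using \<open>R \<noteq> 0\<close> by (simp_all add: R_def)
  ultimately have "(fst p / R)\<^sup>2 + (snd p / R)\<^sup>2 = 1"
    by (simp add: power_divide flip: add_divide_distrib)
  then obtain \<theta> where "fst p / R = cos \<theta>" "snd p / R = sin \<theta>"
    by (rule sincos_total_2pi) blast
  then have "p = polar_pt R \<theta>"
    using \<open>R \<noteq> 0\<close> by (auto simp: polar_pt_def field_simps prod_eq_iff)
  then show ?thesis
    using that by (simp add: R_def)
qed

lemma polar_pt_in_rhodonea_variety_iff:
  assumes "m2 \<ge> 1"
  shows "polar_pt r \<theta> \<in> rhodonea_variety m1 m2 \<longleftrightarrow>
    \<bar>r\<bar> \<le> 1 \<and> (r = 0 \<or> (cheb_T m1 \<bar>r\<bar>)\<^sup>2 = (cos (real m2 * \<theta>))\<^sup>2)"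
proof -
  have norm: "(r * cos \<theta>)\<^sup>2 + (r * sin \<theta>)\<^sup>2 = r\<^sup>2"
    by (simp add: power_mult_distrib flip: distrib_left)
  have "(harm_H m2 (r * cos \<theta>) (r * sin \<theta>))\<^sup>2 = (r\<^sup>2) ^ m2 * (cos (real m2 * \<theta>))\<^sup>2"
    by (simp add: harm_H_polar power_mult_distrib power_mult[symmetric] mult.commute)
  then have "polar_pt r \<theta> \<in> rhodonea_variety m1 m2 \<longleftrightarrow>
      \<bar>r\<bar> \<le> 1 \<and> (r\<^sup>2) ^ m2 * (cheb_T m1 \<bar>r\<bar>)\<^sup>2 = (r\<^sup>2) ^ m2 * (cos (real m2 * \<theta>))\<^sup>2"
    using polar_pt_in_unit_disk_iff[of r \<theta>]
    by (simp add: rhodonea_variety_def polar_pt_def norm)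
  moreover have "(r\<^sup>2) ^ m2 = 0 \<longleftrightarrow> r = 0"
    using assms by simp
  ultimately show ?thesis
    by auto
qed

lemma rhodonea_curve_polar:
  "rhodonea_curve m1 m2 \<alpha> t = polar_pt (cos (real m2 * t)) (real m1 * t - \<alpha> * pi)"
  unfolding rhodonea_curve_def polar_pt_def ..

lemma rhodonea_curve_image_period:
  "rhodonea_curve m1 m2 \<alpha> ` {0..<2 * pi} = range (rhodonea_curve m1 m2 \<alpha>)"
proof -
  have "rhodonea_curve m1 m2 \<alpha> t \<in> rhodonea_curve m1 m2 \<alpha> ` {0..<2 * pi}" for t
  proof
    define n where "n = \<lfloor>t / (2 * pi)\<rfloor>"
    show "t - of_int n * (2 * pi) \<in> {0..<2 * pi}"
      unfolding n_def using floor_divide_lower[of "2 * pi" t] floor_divide_upper[of "2 * pi" t]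
      by (auto simp: algebra_simps)
    have "real m2 * (t - of_int n * (2 * pi)) = real m2 * t + of_int (- int m2 * n) * (2 * pi)"
      "real m1 * (t - of_int n * (2 * pi)) - \<alpha> * pi
         = (real m1 * t - \<alpha> * pi) + of_int (- int m1 * n) * (2 * pi)"
      by (simp_all add: algebra_simps)
    then show "rhodonea_curve m1 m2 \<alpha> t = rhodonea_curve m1 m2 \<alpha> (t - of_int n * (2 * pi))"
      unfolding rhodonea_curve_def
      by (simp only: cos_plus_2pi_multiple sin_plus_2pi_multiple)
  qed
  then show ?thesis
    by auto
qed

lemma rhodonea_curve_in_variety:
  assumes "m2 \<ge> 1" and "real m2 * \<alpha> \<in> \<int>"
  shows "rhodonea_curve m1 m2 \<alpha> t \<in> rhodonea_variety m1 m2"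
proof -
  obtain \<rho> :: int where \<rho>: "real m2 * \<alpha> = of_int \<rho>"
    using assms(2) by (auto elim: Ints_cases)
  have "real m2 * (real m1 * t - \<alpha> * pi) = real m1 * (real m2 * t) - (real m2 * \<alpha>) * pi"
    by (simp add: algebra_simps)
  also have "\<dots> = real m1 * (real m2 * t) + of_int (- \<rho>) * pi"
    by (simp add: \<rho>)
  finally have "(cos (real m2 * (real m1 * t - \<alpha> * pi)))\<^sup>2 = (cos (real m1 * (real m2 * t)))\<^sup>2"
    by (simp only: cos_squared_add_int_pi)
  then show ?thesis
    unfolding rhodonea_curve_polar polar_pt_in_rhodonea_variety_iff[OF assms(1)]
    by (simp add: cheb_T_abs_cos_squared abs_cos_le_one)
qed

lemma int_window_decomposition:
  fixes M e j :: int
  assumes "M > 0"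
  obtains i q where "j = i + M * q" "e \<le> i" "i < e + M"
proof
  show "j = ((j - e) mod M + e) + M * ((j - e) div M)"
    by (simp add: algebra_simps)
  show "e \<le> (j - e) mod M + e" "(j - e) mod M + e < e + M"
    using assms by simp_all
qed

lemma rhodonea_phase_decomposition:
  fixes m1 m2 :: nat and k :: int
  assumes "m2 \<ge> 1"
  obtains \<rho> j l where "\<rho> < 2 * gcd m1 m2" "int \<rho> + k = (int m1 - int m2) * j + 2 * int m2 * l"
proof -
  define g where "g = int (gcd m1 m2)"
  have "g > 0"
    using assms by (simp add: g_def)
  define d where "d = gcd (int m1 - int m2) (2 * int m2)"
  have "d dvd 2 * (int m1 - int m2) + 2 * int m2"
    unfolding d_def by (intro dvd_add dvd_mult gcd_dvd1 gcd_dvd2)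
  moreover have "d dvd 2 * int m2"
    unfolding d_def by simp
  ultimately have "d dvd gcd (2 * int m1) (2 * int m2)"
    by simp
  also have "gcd (2 * int m1) (2 * int m2) = 2 * g"
    by (simp add: g_def gcd_mult_distrib_int[symmetric])
  finally have d_dvd: "d dvd 2 * g" .
  define \<rho> where "\<rho> = nat ((- k) mod (2 * g))"
  have "0 \<le> (- k) mod (2 * g)" "(- k) mod (2 * g) < 2 * g"
    using \<open>g > 0\<close> by simp_all
  then have \<rho>: "int \<rho> = (- k) mod (2 * g)" "\<rho> < 2 * gcd m1 m2"
    unfolding \<rho>_def g_def by linarith+
  have "2 * g dvd - k - (- k) mod (2 * g)"
    by (rule dvd_minus_mod)
  then have "2 * g dvd int \<rho> + k"
    unfolding \<rho>(1) by (metis dvd_minus_iff minus_diff_eq diff_minus_eq_add add.commute)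
  then obtain w where w: "int \<rho> + k = d * w"
    using d_dvd dvd_trans by (blast elim: dvdE)
  obtain a b where ab: "a * (int m1 - int m2) + b * (2 * int m2) = d"
    unfolding d_def using bezout_int by blast
  have "int \<rho> + k = (a * (int m1 - int m2) + b * (2 * int m2)) * w"
    unfolding w ab ..
  then have "int \<rho> + k = (int m1 - int m2) * (a * w) + 2 * int m2 * (b * w)"
    by (simp add: algebra_simps)
  then show ?thesis
    using that \<rho>(2) by blast
qed

lemma polar_pt_on_rhodonea_curve:
  assumes "m2 \<ge> 1" "0 \<le> R" "R \<le> 1" "(cheb_T m1 R)\<^sup>2 = (cos (real m2 * \<theta>))\<^sup>2"
  obtains \<rho> t where "\<rho> < 2 * gcd m1 m2" "rhodonea_curve m1 m2 (real \<rho> / real m2) t = polar_pt R \<theta>"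
proof -
  obtain k :: int where "real m2 * \<theta> = real m1 * arccos R + of_int k * pi
      \<or> real m2 * \<theta> = real m1 * (- arccos R) + of_int k * pi"
    using cos_squared_eq_cos_squaredE[of "real m2 * \<theta>" "real m1 * arccos R"] assms(4)
    unfolding cheb_T_def by auto
  then obtain s where s: "cos s = R" "real m2 * \<theta> = real m1 * s + of_int k * pi"
    using assms(2,3) by (metis cos_arccos cos_minus neg_le_0_iff_le order.trans zero_le_one)
  obtain \<rho> j l where \<rho>: "\<rho> < 2 * gcd m1 m2" "int \<rho> + k = (int m1 - int m2) * j + 2 * int m2 * l"
    using rhodonea_phase_decomposition[OF assms(1)] .
  have \<rho>_real: "real \<rho> = (real m1 - real m2) * of_int j + 2 * real m2 * of_int l - of_int k"
    using arg_cong[OF \<rho>(2), of real_of_int] by simp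
  define t where "t = (s + of_int j * pi) / real m2"
  have m2t: "real m2 * t = s + of_int j * pi"
    using assms(1) by (simp add: t_def)
  have "cos (real m2 * t) = cos (of_int j * pi) * R"
    by (simp only: m2t cos_add_int_pi s(1))
  also have "cos (of_int j * pi) = cos (of_int (j - 2 * l) * pi)"
    using cos_npi_int[of j] cos_npi_int[of "j - 2 * l"] by (simp add: mult.commute)
  finally have radius: "cos (real m2 * t) = cos (of_int (j - 2 * l) * pi) * R" .
  have "real m2 * (real m1 * t - real \<rho> / real m2 * pi) = real m1 * (real m2 * t) - real \<rho> * pi"
    using assms(1) by (simp add: algebra_simps)
  also have "\<dots> = real m2 * \<theta> + real m2 * (of_int (j - 2 * l) * pi)"
    unfolding m2t \<rho>_real s(2) by (simp add: algebra_simps)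
  finally have "real m1 * t - real \<rho> / real m2 * pi = \<theta> + of_int (j - 2 * l) * pi"
    using assms(1) by (simp flip: distrib_left)
  then have "rhodonea_curve m1 m2 (real \<rho> / real m2) t = polar_pt R \<theta>"
    unfolding rhodonea_curve_polar radius by (simp only: polar_pt_add_int_pi)
  then show ?thesis
    using that \<rho>(1) by blast
qed

lemma rhodonea_variety_eq_Union_curves:
  assumes "m2 \<ge> 1"
  shows "rhodonea_variety m1 m2 =
    (\<Union>\<rho>\<in>{0..<2 * gcd m1 m2}. rhodonea_curve m1 m2 (real \<rho> / real m2) ` {0..<2 * pi})"
proof
  have "real m2 * (real \<rho> / real m2) \<in> \<int>" for \<rho>
    using assms by simp
  then show "(\<Union>\<rho>\<in>{0..<2 * gcd m1 m2}. rhodonea_curve m1 m2 (real \<rho> / real m2) ` {0..<2 * pi})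
      \<subseteq> rhodonea_variety m1 m2"
    using rhodonea_curve_in_variety[OF assms] by blast
next
  show "rhodonea_variety m1 m2
      \<subseteq> (\<Union>\<rho>\<in>{0..<2 * gcd m1 m2}. rhodonea_curve m1 m2 (real \<rho> / real m2) ` {0..<2 * pi})"
  proof
    fix p assume p: "p \<in> rhodonea_variety m1 m2"
    define R where "R = sqrt ((fst p)\<^sup>2 + (snd p)\<^sup>2)"
    obtain \<theta> where p_polar: "p = polar_pt R \<theta>"
      unfolding R_def by (rule polar_ptE)
    have "R \<ge> 0"
      by (simp add: R_def)
    with p have "R \<le> 1" and R_cases: "R = 0 \<or> (cheb_T m1 R)\<^sup>2 = (cos (real m2 * \<theta>))\<^sup>2"
      unfolding p_polar polar_pt_in_rhodonea_variety_iff[OF assms] by auto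
    \<comment> \<open>at the origin any angle will do; this one gives \<open>cos (m2 \<theta>') = cos (m1 \<pi>/2) = T\<^sub>m\<^sub>1(0)\<close>\<close>
    define \<theta>' where "\<theta>' = (if R = 0 then real m1 * pi / (2 * real m2) else \<theta>)"
    have "p = polar_pt R \<theta>'"
      by (simp add: p_polar \<theta>'_def polar_pt_def)
    moreover have "(cheb_T m1 R)\<^sup>2 = (cos (real m2 * \<theta>'))\<^sup>2"
      using R_cases assms by (auto simp: \<theta>'_def cheb_T_def)
    ultimately obtain \<rho> t where "\<rho> < 2 * gcd m1 m2" "p = rhodonea_curve m1 m2 (real \<rho> / real m2) t"
      using polar_pt_on_rhodonea_curve[OF assms \<open>R \<ge> 0\<close> \<open>R \<le> 1\<close>] by metis
    then show "p \<in> (\<Union>\<rho>\<in>{0..<2 * gcd m1 m2}. rhodonea_curve m1 m2 (real \<rho> / real m2) ` {0..<2 * pi})"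
      unfolding rhodonea_curve_image_period by (intro UN_I[of \<rho>]) auto
  qed
qed

lemma cos_squared_at_node:
  assumes "m \<ge> 1"
  shows "(cos (real m * (of_int i * pi / (2 * real m))))\<^sup>2 = (if even i then 1 else 0)"
proof -
  have "real m * (of_int i * pi / (2 * real m)) = of_int i * (pi / 2)"
    using assms by (simp add: field_simps)
  then show ?thesis
    by (simp only: cos_half_pi_multiple_squared)
qed

lemma cos_node_radius_in_unit_interval:
  assumes "0 \<le> i" "i \<le> int m" "m \<ge> 1"
  shows "cos (of_int i * pi / (2 * real m)) \<in> {0..1}"
proof -
  have "of_int i * pi \<le> real m * pi"
    using assms(2) by (simp add: mult_right_mono)
  then have "0 \<le> of_int i * pi / (2 * real m)" "of_int i * pi / (2 * real m) \<le> pi / 2"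
    using assms(1,3) by (simp_all add: field_simps)
  then show ?thesis
    by (auto intro: cos_ge_zero)
qed

lemma cheb_T_squared_at_node:
  assumes "m \<ge> 1"
  shows "(cheb_T m (cos (of_int i * pi / (2 * real m))))\<^sup>2 = (if even i then 1 else 0)"
  unfolding cheb_T_cos by (rule cos_squared_at_node[OF assms])

lemma cheb_T_squared_in_01_iff:
  assumes "m \<ge> 1" "r \<in> {0..1}"
  shows "(cheb_T m r)\<^sup>2 \<in> {0, 1} \<longleftrightarrow>
    (\<exists>i :: int. 0 \<le> i \<and> i \<le> int m \<and> r = cos (of_int i * pi / (2 * real m)))"
proof
  assume "(cheb_T m r)\<^sup>2 \<in> {0, 1}"
  then obtain i :: int where i: "real m * arccos r = of_int i * (pi / 2)"
    unfolding cheb_T_def cos_squared_in_01_iff by blast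
  have "0 \<le> arccos r" "arccos r \<le> pi / 2"
    using assms(2) arccos_lbound[of r] arccos_le_pi2[of r] by auto
  then have "0 \<le> of_int i * (pi / 2)" "of_int i * (pi / 2) \<le> real m * (pi / 2)"
    unfolding i[symmetric] using mult_left_mono[of "arccos r" "pi / 2" "real m"] by simp_all
  then have "0 \<le> i" "i \<le> int m"
    using pi_gt_zero by (simp_all add: zero_le_mult_iff)
  moreover have "arccos r = of_int i * pi / (2 * real m)"
    using i assms(1) by (simp add: field_simps)
  then have "r = cos (of_int i * pi / (2 * real m))"
    using cos_arccos[of r] assms(2) by simp
  ultimately show "\<exists>i :: int. 0 \<le> i \<and> i \<le> int m \<and> r = cos (of_int i * pi / (2 * real m))"
    by blast
next
  assume "\<exists>i :: int. 0 \<le> i \<and> i \<le> int m \<and> r = cos (of_int i * pi / (2 * real m))"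
  then obtain i :: int where "r = cos (of_int i * pi / (2 * real m))"
    by blast
  then show "(cheb_T m r)\<^sup>2 \<in> {0, 1}"
    by (simp only: cheb_T_squared_at_node[OF assms(1)]) simp
qed

definition rhodonea_node_grid :: "nat \<Rightarrow> nat \<Rightarrow> (real \<times> real) set" where
  "rhodonea_node_grid m1 m2 =
     {polar_pt (cos (of_int i1 * pi / (2 * real m1))) (of_int j * pi / (2 * real m2)) | i1 j.
        0 \<le> i1 \<and> i1 \<le> int m1 \<and> even (i1 + j)}"

lemma rhodonea_nodes_polar:
  "rhodonea_nodes m1 m2 = (\<lambda>(i1, i2). polar_pt (cos (of_int i1 * pi / (2 * real m1)))
      (of_int i2 * pi / (2 * real m2))) ` nodal_index m1 m2"
  unfolding rhodonea_nodes_def polar_pt_def ..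

lemma rhodonea_nodes_eq_grid:
  assumes "m1 \<ge> 1" "m2 \<ge> 1"
  shows "rhodonea_nodes m1 m2 = rhodonea_node_grid m1 m2"
proof
  show "rhodonea_nodes m1 m2 \<subseteq> rhodonea_node_grid m1 m2"
    unfolding rhodonea_nodes_polar rhodonea_node_grid_def nodal_index_def by fastforce
next
  show "rhodonea_node_grid m1 m2 \<subseteq> rhodonea_nodes m1 m2"
  proof
    fix p assume "p \<in> rhodonea_node_grid m1 m2"
    then obtain i1 j where i1: "0 \<le> i1" "i1 \<le> int m1" "even (i1 + j)" and
      p: "p = polar_pt (cos (of_int i1 * pi / (2 * real m1))) (of_int j * pi / (2 * real m2))"
      unfolding rhodonea_node_grid_def by blast
    have "0 < 4 * int m2"
      using assms(2) by simp
    then obtain i2 q where i2: "j = i2 + 4 * int m2 * q" "1 - 2 * int m2 \<le> i2" "i2 < 1 - 2 * int m2 + 4 * int m2"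
      by (rule int_window_decomposition)
    have "of_int j * pi / (2 * real m2) = of_int i2 * pi / (2 * real m2) + of_int q * (2 * pi)"
      using assms(2) by (simp add: i2(1) field_simps)
    then have p_i2: "p = polar_pt (cos (of_int i1 * pi / (2 * real m1))) (of_int i2 * pi / (2 * real m2))"
      by (simp only: p polar_pt_add_2pi_multiple)
    have "even (i1 + i2)"
      using i1(3) by (simp add: i2(1))
    show "p \<in> rhodonea_nodes m1 m2"
    proof (cases "i1 = int m1 \<and> 0 < i2")
      case False
      with i1 i2 \<open>even (i1 + i2)\<close> have "(i1, i2) \<in> nodal_index m1 m2"
        by (auto simp: nodal_index_def)
      then show ?thesis
        unfolding rhodonea_nodes_polar p_i2 by force
    next
      case True
      \<comment> \<open>the radius vanishes, so the angle may be turned by a half turn back into the index range\<close>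
      with i1 i2 \<open>even (i1 + i2)\<close> have "(i1, i2 - 2 * int m2) \<in> nodal_index m1 m2"
        by (auto simp: nodal_index_def)
      moreover have "cos (of_int i1 * pi / (2 * real m1)) = 0"
        using True assms(1) by simp
      ultimately show ?thesis
        unfolding rhodonea_nodes_polar p_i2 by (force simp: polar_pt_def)
    qed
  qed
qed

lemma rhodonea_node_grid_eq_extremal_points:
  assumes "m1 \<ge> 1" "m2 \<ge> 1"
  shows "rhodonea_node_grid m1 m2 =
    {polar_pt r \<theta> | r \<theta>. r \<in> {0..1} \<and> polar_pt r \<theta> \<in> unit_disk \<and>
       (cheb_T m1 r)\<^sup>2 = (cos (real m2 * \<theta>))\<^sup>2 \<and> (cos (real m2 * \<theta>))\<^sup>2 \<in> {0, 1}}"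
    (is "_ = ?extremal")
proof
  show "rhodonea_node_grid m1 m2 \<subseteq> ?extremal"
  proof
    fix p assume "p \<in> rhodonea_node_grid m1 m2"
    then obtain i1 j where i1: "0 \<le> i1" "i1 \<le> int m1" "even (i1 + j)" and
      p: "p = polar_pt (cos (of_int i1 * pi / (2 * real m1))) (of_int j * pi / (2 * real m2))"
      unfolding rhodonea_node_grid_def by blast
    define r where "r = cos (of_int i1 * pi / (2 * real m1))"
    define \<theta> where "\<theta> = of_int j * pi / (2 * real m2)"
    have "r \<in> {0..1}"
      unfolding r_def using i1(1,2) assms(1) by (rule cos_node_radius_in_unit_interval)
    moreover have "(cheb_T m1 r)\<^sup>2 = (cos (real m2 * \<theta>))\<^sup>2"
      using i1(3) unfolding r_def \<theta>_def cheb_T_squared_at_node[OF assms(1)] cos_squared_at_node[OF assms(2)]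
      by auto
    moreover have "(cos (real m2 * \<theta>))\<^sup>2 \<in> {0, 1}"
      unfolding \<theta>_def cos_squared_at_node[OF assms(2)] by simp
    moreover from \<open>r \<in> {0..1}\<close> have "polar_pt r \<theta> \<in> unit_disk"
      by (simp add: polar_pt_in_unit_disk_iff)
    ultimately show "p \<in> ?extremal"
      unfolding p r_def[symmetric] \<theta>_def[symmetric] by blast
  qed
next
  show "?extremal \<subseteq> rhodonea_node_grid m1 m2"
  proof
    fix p assume "p \<in> ?extremal"
    then obtain r \<theta> where p: "p = polar_pt r \<theta>" and r: "r \<in> {0..1}" and
      eq: "(cheb_T m1 r)\<^sup>2 = (cos (real m2 * \<theta>))\<^sup>2" and extremal: "(cos (real m2 * \<theta>))\<^sup>2 \<in> {0, 1}"
      by blast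
    obtain i1 :: int where i1: "0 \<le> i1" "i1 \<le> int m1" "r = cos (of_int i1 * pi / (2 * real m1))"
      using cheb_T_squared_in_01_iff[OF assms(1) r] eq extremal by auto
    obtain j :: int where "real m2 * \<theta> = of_int j * (pi / 2)"
      using extremal cos_squared_in_01_iff by blast
    then have \<theta>: "\<theta> = of_int j * pi / (2 * real m2)"
      using assms(2) by (simp add: field_simps)
    have "even (i1 + j)"
      using eq unfolding i1(3) \<theta> cheb_T_squared_at_node[OF assms(1)] cos_squared_at_node[OF assms(2)]
      by (auto split: if_splits)
    then show "p \<in> rhodonea_node_grid m1 m2"
      unfolding rhodonea_node_grid_def p i1(3) \<theta> using i1 by blast
  qed
qed

theorem theorem4p1:
  fixes m1 m2 :: nat
  assumes "m1 \<ge> 1" and "m2 \<ge> 1"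
  shows "rhodonea_variety m1 m2 =
           (\<Union>\<rho>\<in>{0..<2 * gcd m1 m2}. rhodonea_curve m1 m2 (real \<rho> / real m2) ` {0..<2 * pi})
         \<and> rhodonea_nodes m1 m2 =
           {polar_pt r \<theta> | r \<theta>. r \<in> {0..1} \<and> polar_pt r \<theta> \<in> unit_disk \<and>
              (cheb_T m1 r)\<^sup>2 = (cos (real m2 * \<theta>))\<^sup>2 \<and> (cos (real m2 * \<theta>))\<^sup>2 \<in> {0, 1}}"
  using rhodonea_variety_eq_Union_curves[OF assms(2)] rhodonea_nodes_eq_grid[OF assms]
    rhodonea_node_grid_eq_extremal_points[OF assms]
  by simp

end
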